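(* Let $n\ge2$ and let $P\in\mathrm{Mat}(n^2,\mathbb{C})$ be an orthogonal projection ($P^*=P$, $P^2=P$) of rank $r$. With $P_1=P\otimes I_n$, $P_2=I_n\otimes P$ and $t_m=\operatorname{tr}_3\big((P_1P_2)^m\big)$, define $$F[P]=(rn-t_1)(t_2-t_3)-(t_1-t_2)^2 .$$ Then $F[P]\ge 0$.
   Context: $I_n$ is the $n\times n$ identity matrix, $\otimes$ is the Kronecker product, and $\operatorname{tr}_3$ is the matrix trace on $\mathrm{Mat}(n^3,\mathbb{C})$; $(P_1P_2)^m$ is the $m$-th power of the matrix $P_1P_2$. *)

theory Defs
  imports "Jordan_Normal_Form.Schur_Decomposition" "Jordan_Normal_Form.DL_Rank" "HOL-Library.Complex_Order"
begin

definition kron :: "'a :: times mat \<Rightarrow> 'a mat \<Rightarrow> 'a mat" where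
  "kron A B = mat (dim_row A * dim_row B) (dim_col A * dim_col B)
     (\<lambda>(i, j). A $$ (i div dim_row B, j div dim_col B) * B $$ (i mod dim_row B, j mod dim_col B))"

definition mat_trace :: "'a :: comm_monoid_add mat \<Rightarrow> 'a" where
  "mat_trace A = (\<Sum>i<dim_row A. A $$ (i, i))"

end

theory Submission
  imports Defs "HOL-Analysis.Convex"
begin

text \<open>Write H = P \<otimes> I and Q = I \<otimes> P. Both are orthogonal projections, tr H = r n because
  the trace of an idempotent is its rank, and cyclicity of the trace gives t m = tr (K^m) for
  K = H Q H. For X = (I - Q) H and Y = X K one finds, under the trace, X* X = H - K,
  X* Y = K - K^2 and Y* Y = K^2 - K^3. Hence F is the Gram determinant of X and Y for the
  Hilbert-Schmidt inner product tr (A* B), which is nonnegative by Cauchy-Schwarz because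
  tr (X* Y) is real.\<close>

lemma sum_lessThan_mult_nat:
  fixes f :: "nat \<Rightarrow> 'a::comm_monoid_add"
  shows "(\<Sum>k<a * b. f k) = (\<Sum>i<a. \<Sum>j<b. f (i * b + j))"
proof -
  have "(\<Sum>k<a * b. f k) = (\<Sum>i<a. \<Sum>k\<in>{i * b..<i * b + b}. f k)"
    by (simp add: sum.nat_group)
  also have "\<dots> = (\<Sum>i<a. \<Sum>j<b. f (i * b + j))"
    by (simp add: sum.atLeastLessThan_shift_0 atLeast0LessThan)
  finally show ?thesis .
qed

lemma mult_add_less_mult_nat:
  fixes i j a b :: nat
  assumes "i < a" and "j < b"
  shows "i * b + j < a * b"
proof -
  have "i * b + j < (i + 1) * b" using assms(2) by simp
  also have "\<dots> \<le> a * b" using assms(1) by (intro mult_le_mono1) simp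
  finally show ?thesis .
qed

lemma less_mult_imp_div_mod_less:
  fixes i a b :: nat
  assumes "i < a * b"
  shows "i div b < a" and "i mod b < b"
proof -
  have "b > 0" using assms by (cases "b = 0") simp_all
  then show "i div b < a" and "i mod b < b"
    using assms by (simp_all add: less_mult_imp_div_less)
qed

lemma dim_row_kron [simp]: "dim_row (kron A B) = dim_row A * dim_row B"
  and dim_col_kron [simp]: "dim_col (kron A B) = dim_col A * dim_col B"
  by (simp_all add: kron_def)

lemma kron_carrier_mat [simp]:
  "kron A B \<in> carrier_mat (dim_row A * dim_row B) (dim_col A * dim_col B)"
  by (intro carrier_matI) simp_all

lemma index_kron [simp]:
  "i < dim_row A * dim_row B \<Longrightarrow> j < dim_col A * dim_col B \<Longrightarrow>
   kron A B $$ (i, j) = A $$ (i div dim_row B, j div dim_col B) * B $$ (i mod dim_row B, j mod dim_col B)"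
  by (simp add: kron_def)

lemma kron_mult:
  fixes A C :: "'a::comm_semiring_1 mat"
  assumes A: "A \<in> carrier_mat a a'" and B: "B \<in> carrier_mat b b'"
    and C: "C \<in> carrier_mat a' a''" and D: "D \<in> carrier_mat b' b''"
  shows "kron A B * kron C D = kron (A * C) (B * D)"
proof (rule eq_matI)
  fix i j
  assume "i < dim_row (kron (A * C) (B * D))" and "j < dim_col (kron (A * C) (B * D))"
  then have i: "i < a * b" and j: "j < a'' * b''" using A B C D by auto
  have "(kron A B * kron C D) $$ (i, j) = (\<Sum>k<a' * b'. kron A B $$ (i, k) * kron C D $$ (k, j))"
    using A B C D i j by (simp add: scalar_prod_def atLeast0LessThan)
  also have "\<dots> = (\<Sum>p<a'. \<Sum>q<b'.
      (A $$ (i div b, p) * C $$ (p, j div b'')) * (B $$ (i mod b, q) * D $$ (q, j mod b'')))"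
    using A B C D i j by (simp add: sum_lessThan_mult_nat mult_add_less_mult_nat mult_ac)
  also have "\<dots> = (\<Sum>p<a'. A $$ (i div b, p) * C $$ (p, j div b'')) *
      (\<Sum>q<b'. B $$ (i mod b, q) * D $$ (q, j mod b''))"
    by (simp add: sum_product)
  also have "\<dots> = kron (A * C) (B * D) $$ (i, j)"
    using A B C D i j less_mult_imp_div_mod_less[OF i] less_mult_imp_div_mod_less[OF j]
    by (simp add: scalar_prod_def atLeast0LessThan)
  finally show "(kron A B * kron C D) $$ (i, j) = kron (A * C) (B * D) $$ (i, j)" .
qed (use A B C D in simp_all)

lemma dim_row_mat_adjoint [simp]: "dim_row (mat_adjoint A) = dim_col A"
  and dim_col_mat_adjoint [simp]: "dim_col (mat_adjoint A) = dim_row A"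
  by (simp_all add: mat_adjoint_def)

lemma index_mat_adjoint [simp]:
  "i < dim_col A \<Longrightarrow> j < dim_row A \<Longrightarrow> mat_adjoint (A :: complex mat) $$ (i, j) = cnj (A $$ (j, i))"
  unfolding mat_adjoint_def by (subst mat_of_rows_index) auto

lemma mat_adjoint_one [simp]: "mat_adjoint (1\<^sub>m n :: complex mat) = 1\<^sub>m n"
  by (rule eq_matI) auto

lemma mat_adjoint_mult:
  fixes A B :: "complex mat"
  assumes "A \<in> carrier_mat m n" and "B \<in> carrier_mat n k"
  shows "mat_adjoint (A * B) = mat_adjoint B * mat_adjoint A"
  by (rule eq_matI) (use assms in \<open>auto simp: scalar_prod_def ac_simps\<close>)

lemma mat_adjoint_minus:
  fixes A B :: "complex mat"
  assumes "A \<in> carrier_mat m n" and "B \<in> carrier_mat m n"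
  shows "mat_adjoint (A - B) = mat_adjoint A - mat_adjoint B"
  by (rule eq_matI) (use assms in auto)

lemma mat_adjoint_kron: "mat_adjoint (kron (A :: complex mat) B) = kron (mat_adjoint A) (mat_adjoint B)"
proof (rule eq_matI)
  fix i j
  assume "i < dim_row (kron (mat_adjoint A) (mat_adjoint B))"
    and "j < dim_col (kron (mat_adjoint A) (mat_adjoint B))"
  then have i: "i < dim_col A * dim_col B" and j: "j < dim_row A * dim_row B" by simp_all
  show "mat_adjoint (kron A B) $$ (i, j) = kron (mat_adjoint A) (mat_adjoint B) $$ (i, j)"
    using i j less_mult_imp_div_mod_less[OF i] less_mult_imp_div_mod_less[OF j] by simp
qed simp_all

lemma mat_trace_one [simp]: "mat_trace (1\<^sub>m n :: 'a::semiring_1 mat) = of_nat n"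
  by (simp add: mat_trace_def)

lemma mat_trace_minus:
  fixes A B :: "'a::ab_group_add mat"
  assumes "A \<in> carrier_mat n n" and "B \<in> carrier_mat n n"
  shows "mat_trace (A - B) = mat_trace A - mat_trace B"
  using assms by (simp add: mat_trace_def sum_subtractf)

lemma mat_trace_mult_comm:
  fixes A B :: "'a::comm_semiring_1 mat"
  assumes "A \<in> carrier_mat m n" and "B \<in> carrier_mat n m"
  shows "mat_trace (A * B) = mat_trace (B * A)"
proof -
  have "mat_trace (A * B) = (\<Sum>i<m. \<Sum>j<n. A $$ (i, j) * B $$ (j, i))"
    using assms by (simp add: mat_trace_def scalar_prod_def atLeast0LessThan)
  also have "\<dots> = (\<Sum>j<n. \<Sum>i<m. B $$ (j, i) * A $$ (i, j))"
    by (subst sum.swap) (simp add: ac_simps)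
  also have "\<dots> = mat_trace (B * A)"
    using assms by (simp add: mat_trace_def scalar_prod_def atLeast0LessThan)
  finally show ?thesis .
qed

lemma mat_trace_kron:
  fixes A B :: "'a::comm_semiring_1 mat"
  assumes A: "A \<in> carrier_mat a a" and B: "B \<in> carrier_mat b b"
  shows "mat_trace (kron A B) = mat_trace A * mat_trace B"
proof -
  have "mat_trace (kron A B) = (\<Sum>p<a. \<Sum>q<b. A $$ (p, p) * B $$ (q, q))"
    using A B by (simp add: mat_trace_def sum_lessThan_mult_nat mult_add_less_mult_nat)
  also have "\<dots> = mat_trace A * mat_trace B"
    using A B by (simp add: mat_trace_def sum_product)
  finally show ?thesis .
qed

lemma mat_trace_mat_adjoint:
  "A \<in> carrier_mat n n \<Longrightarrow> mat_trace (mat_adjoint A) = cnj (mat_trace (A :: complex mat))"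
  by (simp add: mat_trace_def)

lemma mat_trace_adjoint_mult:
  fixes X Y :: "complex mat"
  assumes "X \<in> carrier_mat m n" and "Y \<in> carrier_mat m n"
  shows "mat_trace (mat_adjoint X * Y) = (\<Sum>(j, i)\<in>{..<n} \<times> {..<m}. cnj (X $$ (i, j)) * Y $$ (i, j))"
  using assms by (simp add: mat_trace_def scalar_prod_def atLeast0LessThan sum.cartesian_product)

lemma mat_trace_adjoint_mult_self:
  fixes X :: "complex mat"
  assumes "X \<in> carrier_mat m n"
  shows "mat_trace (mat_adjoint X * X) = of_real (\<Sum>(j, i)\<in>{..<n} \<times> {..<m}. (cmod (X $$ (i, j)))\<^sup>2)"
  unfolding mat_trace_adjoint_mult[OF assms assms] of_real_sum
  by (intro sum.cong refl) (metis (no_types, lifting) case_prod_beta complex_norm_square mult.commute)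

lemma mat_trace_adjoint_mult_Cauchy_Schwarz:
  fixes X Y :: "complex mat"
  assumes X: "X \<in> carrier_mat m n" and Y: "Y \<in> carrier_mat m n"
  shows "(cmod (mat_trace (mat_adjoint X * Y)))\<^sup>2 \<le>
    Re (mat_trace (mat_adjoint X * X)) * Re (mat_trace (mat_adjoint Y * Y))"
proof -
  define I where "I = {..<n} \<times> {..<m}"
  define x where "x = (\<lambda>(j, i). X $$ (i, j))"
  define y where "y = (\<lambda>(j, i). Y $$ (i, j))"
  have "cmod (mat_trace (mat_adjoint X * Y)) = cmod (\<Sum>p\<in>I. cnj (x p) * y p)"
    unfolding mat_trace_adjoint_mult[OF X Y] I_def x_def y_def by (simp add: case_prod_beta)
  also have "\<dots> \<le> (\<Sum>p\<in>I. cmod (x p) * cmod (y p))"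
    by (rule order_trans[OF norm_sum]) (simp add: norm_mult)
  finally have "(cmod (mat_trace (mat_adjoint X * Y)))\<^sup>2 \<le> (\<Sum>p\<in>I. cmod (x p) * cmod (y p))\<^sup>2"
    by (simp add: power_mono)
  also have "\<dots> \<le> (\<Sum>p\<in>I. (cmod (x p))\<^sup>2) * (\<Sum>p\<in>I. (cmod (y p))\<^sup>2)"
    by (rule Cauchy_Schwarz_ineq_sum)
  also have "\<dots> = Re (mat_trace (mat_adjoint X * X)) * Re (mat_trace (mat_adjoint Y * Y))"
    unfolding mat_trace_adjoint_mult_self[OF X] mat_trace_adjoint_mult_self[OF Y] I_def x_def y_def
    by (simp add: case_prod_beta)
  finally show ?thesis .
qed

lemma mat_trace_adjoint_mult_sq_le:
  fixes X Y :: "complex mat"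
  assumes X: "X \<in> carrier_mat m n" and Y: "Y \<in> carrier_mat m n"
    and real: "cnj (mat_trace (mat_adjoint X * Y)) = mat_trace (mat_adjoint X * Y)"
  shows "(mat_trace (mat_adjoint X * Y))\<^sup>2 \<le> mat_trace (mat_adjoint X * X) * mat_trace (mat_adjoint Y * Y)"
proof -
  define b where "b = mat_trace (mat_adjoint X * Y)"
  obtain \<alpha> \<gamma> where \<alpha>: "mat_trace (mat_adjoint X * X) = of_real \<alpha>"
    and \<gamma>: "mat_trace (mat_adjoint Y * Y) = of_real \<gamma>"
    using mat_trace_adjoint_mult_self[OF X] mat_trace_adjoint_mult_self[OF Y] by blast
  have b: "b = of_real (Re b)"
    using real unfolding b_def by (metis Reals_cnj_iff complex_is_Real_iff of_real_Re)
  have "(Re b)\<^sup>2 \<le> (cmod b)\<^sup>2"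
    using abs_Re_le_cmod by (metis abs_ge_zero power2_abs power_mono)
  also have "\<dots> \<le> \<alpha> * \<gamma>"
    using mat_trace_adjoint_mult_Cauchy_Schwarz[OF X Y] unfolding b_def \<alpha> \<gamma> by simp
  finally have "(Re b)\<^sup>2 \<le> \<alpha> * \<gamma>" .
  then have "b\<^sup>2 \<le> of_real \<alpha> * of_real \<gamma>"
    by (subst b) (simp add: less_eq_complex_def)
  then show ?thesis unfolding \<alpha> \<gamma> b_def .
qed

context vec_space
begin

lemma maximal_lin_indpt_subset_spans:
  assumes S: "S \<subseteq> carrier_vec n" and max: "maximal U (\<lambda>T. T \<subseteq> S \<and> lin_indpt T)"
    and s: "s \<in> S"
  shows "s \<in> span U"
proof (rule ccontr)
  assume ns: "s \<notin> span U"
  have US: "U \<subseteq> S" and liU: "lin_indpt U" using max unfolding maximal_def by auto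
  then have U: "U \<subseteq> carrier_vec n" using S by auto
  then have sU: "s \<notin> U" using ns span_mem by auto
  have "lin_indpt (U \<union> {s})" using lin_dep_iff_in_span[OF U liU _ sU] s S ns by auto
  then have "U \<union> {s} = U" using max US s unfolding maximal_def by blast
  then show False using sU by auto
qed

lemma rank_factorization:
  assumes A: "A \<in> carrier_mat n nc"
  obtains W R where "W \<in> carrier_mat n (rank A)" and "R \<in> carrier_mat (rank A) nc" and "W * R = A"
    and "set (cols W) \<subseteq> set (cols A)" and "distinct (cols W)" and "lin_indpt (set (cols W))"
proof -
  have colsA: "set (cols A) \<subseteq> carrier_vec n" using A cols_dim by blast
  have "lin_indpt {}"
    by (metis (no_types) empty_subsetI fin_dim finite_basis_exists subset_li_is_li vec_vs vectorspace.basis_def)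
  then obtain U where max: "maximal U (\<lambda>T. T \<subseteq> set (cols A) \<and> lin_indpt T)" and "finite U"
    using maximal_exists_superset[of "set (cols A)" "\<lambda>T. T \<subseteq> set (cols A) \<and> lin_indpt T" "{}"]
    by auto
  then obtain ws where ws: "set ws = U" "distinct ws" using finite_distinct_list by blast
  have UA: "U \<subseteq> set (cols A)" and liU: "lin_indpt U" using max unfolding maximal_def by auto
  have rank: "rank A = length ws"
    using rank_card_indpt[OF A max] ws distinct_card by metis
  define W where "W = mat_of_cols n ws"
  have W: "W \<in> carrier_mat n (rank A)" unfolding W_def rank by simp
  have colsW: "cols W = ws" unfolding W_def using ws(1) UA colsA by (intro cols_mat_of_cols) auto
  have spanU: "span U = {y \<in> carrier_vec n. \<exists>x \<in> carrier_vec (rank A). W *\<^sub>v x = y}"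
    using col_space_eq[OF W] W unfolding col_space_def colsW ws(1) by auto
  have "\<exists>x. x \<in> carrier_vec (rank A) \<and> W *\<^sub>v x = col A j" if "j < nc" for j
  proof -
    have "col A j \<in> set (cols A)" using that A by (simp add: cols_def)
    then have "col A j \<in> span U" by (rule maximal_lin_indpt_subset_spans[OF colsA max])
    then show ?thesis unfolding spanU by auto
  qed
  then obtain xf where xf: "\<And>j. j < nc \<Longrightarrow> xf j \<in> carrier_vec (rank A) \<and> W *\<^sub>v xf j = col A j"
    by metis
  define R where "R = mat_of_cols (rank A) (map xf [0..<nc])"
  have R: "R \<in> carrier_mat (rank A) nc"
    unfolding R_def using mat_of_cols_carrier(1)[of "rank A" "map xf [0..<nc]"] by simp
  have "W * R = A"
  proof (rule mat_col_eqI)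
    fix j assume "j < dim_col A"
    then have j: "j < nc" using A by simp
    have "col (W * R) j = W *\<^sub>v col R j" by (rule col_mult2[OF W R j])
    also have "\<dots> = W *\<^sub>v xf j" using j xf unfolding R_def by simp
    also have "\<dots> = col A j" using xf[OF j] by simp
    finally show "col (W * R) j = col A j" .
  qed (use W R A in auto)
  moreover have "set (cols W) \<subseteq> set (cols A)" "distinct (cols W)" "lin_indpt (set (cols W))"
    unfolding colsW using ws UA liU by simp_all
  ultimately show thesis using that W R by blast
qed

lemma lin_indpt_cols_mult_left_cancel:
  assumes W: "W \<in> carrier_mat n k" and dist: "distinct (cols W)" and li: "lin_indpt (set (cols W))"
    and M: "M \<in> carrier_mat k l" and M': "M' \<in> carrier_mat k l" and eq: "W * M = W * M'"
  shows "M = M'"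
proof (rule eq_matI)
  fix i j assume i: "i < dim_row M'" and j: "j < dim_col M'"
  define v where "v = col M j - col M' j"
  have v: "v \<in> carrier_vec k" unfolding v_def using M M' j by simp
  have j': "j < l" using j M' by simp
  have "W *\<^sub>v v = W *\<^sub>v col M j - W *\<^sub>v col M' j"
    unfolding v_def using W M M' j' by (simp add: mult_minus_distrib_mat_vec)
  also have "\<dots> = col (W * M) j - col (W * M') j"
    by (simp only: col_mult2[OF W M j'] col_mult2[OF W M' j'])
  also have "\<dots> = 0\<^sub>v n" using eq W M' j by simp
  finally have "v = 0\<^sub>v k" using lin_depI[OF W v _ _ dist] li by blast
  moreover have "v $ i = M $$ (i, j) - M' $$ (i, j)" unfolding v_def using i j M M' by simp
  ultimately show "M $$ (i, j) = M' $$ (i, j)" using i M' by simp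
qed (use M M' in auto)

lemma mat_trace_idempotent_eq_rank:
  assumes P: "P \<in> carrier_mat n n" and idem: "P * P = P"
  shows "mat_trace P = of_nat (rank P)"
proof -
  obtain W R where W: "W \<in> carrier_mat n (rank P)" and R: "R \<in> carrier_mat (rank P) n"
    and WR: "W * R = P" and colsW: "set (cols W) \<subseteq> set (cols P)"
    and dist: "distinct (cols W)" and li: "lin_indpt (set (cols W))"
    using rank_factorization[OF P] .
  have "P * W = W"
  proof (rule mat_col_eqI)
    fix l assume "l < dim_col W"
    then have l: "l < rank P" using W by simp
    have "col W l \<in> set (cols P)" using colsW l W by (auto simp: cols_def)
    then obtain j where j: "j < n" and Wl: "col W l = col P j" using P by (auto simp: cols_def)
    have "col (P * W) l = P *\<^sub>v col W l" by (rule col_mult2[OF P W l])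
    also have "\<dots> = col (P * P) j" unfolding Wl by (rule col_mult2[OF P P j, symmetric])
    also have "\<dots> = col W l" unfolding idem Wl ..
    finally show "col (P * W) l = col W l" .
  qed (use P W in auto)
  then have "W * (R * W) = W * 1\<^sub>m (rank P)"
    using assoc_mult_mat[OF W R W] WR W by simp
  then have RW: "R * W = 1\<^sub>m (rank P)"
    by (rule lin_indpt_cols_mult_left_cancel[OF W dist li mult_carrier_mat[OF R W] one_carrier_mat])
  have "mat_trace P = mat_trace (R * W)"
    using mat_trace_mult_comm[OF W R] WR by simp
  then show ?thesis unfolding RW by simp
qed

end

lemma pow_mat_mult_absorb:
  fixes A B :: "'a::semiring_1 mat"
  assumes A: "A \<in> carrier_mat n n" and B: "B \<in> carrier_mat n n" and AB: "A * B = B"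
    and "m > 0"
  shows "A * B ^\<^sub>m m = B ^\<^sub>m m" and "(B * A) ^\<^sub>m m = B ^\<^sub>m m * A"
proof -
  obtain k where m: "m = Suc k" using \<open>m > 0\<close> gr0_implies_Suc by blast
  show "A * B ^\<^sub>m m = B ^\<^sub>m m" unfolding m
  proof (induction k)
    case 0
    show ?case using A B AB by simp
  next
    case (Suc k)
    have "A * B ^\<^sub>m Suc (Suc k) = (A * B ^\<^sub>m Suc k) * B"
      unfolding pow_mat.simps(2)[of B "Suc k"]
      by (rule assoc_mult_mat[symmetric, OF A pow_carrier_mat[OF B] B])
    then show ?case using Suc.IH by simp
  qed
  show "(B * A) ^\<^sub>m m = B ^\<^sub>m m * A" unfolding m
  proof (induction k)
    case 0
    show ?case using A B by simp
  next
    case (Suc k)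
    have "(B * A) ^\<^sub>m Suc (Suc k) = (B ^\<^sub>m Suc k * A) * (B * A)"
      unfolding pow_mat.simps(2)[of "B * A" "Suc k"] Suc.IH ..
    also have "\<dots> = B ^\<^sub>m Suc k * ((A * B) * A)"
      by (simp only: assoc_mult_mat[OF pow_carrier_mat[OF B] A mult_carrier_mat[OF B A]]
          assoc_mult_mat[OF A B A])
    also have "\<dots> = B ^\<^sub>m Suc (Suc k) * A"
      by (simp only: AB pow_mat.simps(2)[of B "Suc k"] assoc_mult_mat[OF pow_carrier_mat[OF B] B A])
    finally show ?case .
  qed
qed

lemma mat_trace_pow_mult_absorb:
  fixes A B :: "'a::comm_semiring_1 mat"
  assumes A: "A \<in> carrier_mat n n" and B: "B \<in> carrier_mat n n" and AB: "A * B = B"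
  shows "mat_trace ((B * A) ^\<^sub>m m) = mat_trace (B ^\<^sub>m m)"
proof (cases "m = 0")
  case True
  then show ?thesis using A B by simp
next
  case False
  then have "mat_trace ((B * A) ^\<^sub>m m) = mat_trace (B ^\<^sub>m m * A)"
    using pow_mat_mult_absorb(2)[OF A B AB] by simp
  also have "\<dots> = mat_trace (A * B ^\<^sub>m m)"
    using A B by (intro mat_trace_mult_comm) auto
  also have "\<dots> = mat_trace (B ^\<^sub>m m)"
    using pow_mat_mult_absorb(1)[OF A B AB] False by simp
  finally show ?thesis .
qed

text \<open>Instantiated with a fixed \<open>n\<close>, these rules have no variables outside their conclusions,
  so the simplifier can use them to normalise expressions in square matrices.\<close>

lemma square_mat_ring_simps:
  fixes A B C :: "'a::comm_ring mat"
  shows "A \<in> carrier_mat n n \<Longrightarrow> B \<in> carrier_mat n n \<Longrightarrow> A * B \<in> carrier_mat n n"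
    and "A \<in> carrier_mat n n \<Longrightarrow> B \<in> carrier_mat n n \<Longrightarrow> A - B \<in> carrier_mat n n"
    and "A \<in> carrier_mat n n \<Longrightarrow> B \<in> carrier_mat n n \<Longrightarrow> C \<in> carrier_mat n n \<Longrightarrow>
      A * B * C = A * (B * C)"
    and "A \<in> carrier_mat n n \<Longrightarrow> B \<in> carrier_mat n n \<Longrightarrow> C \<in> carrier_mat n n \<Longrightarrow>
      A * (B - C) = A * B - A * C"
    and "A \<in> carrier_mat n n \<Longrightarrow> B \<in> carrier_mat n n \<Longrightarrow> C \<in> carrier_mat n n \<Longrightarrow>
      (A - B) * C = A * C - B * C"
    and "A \<in> carrier_mat n n \<Longrightarrow> B \<in> carrier_mat n n \<Longrightarrow> mat_trace (A - B) = mat_trace A - mat_trace B"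
  by (auto simp: mult_minus_distrib_mat minus_mult_distrib_mat mat_trace_minus)

lemma mat_trace_projection_product_ineq:
  fixes H Q :: "complex mat"
  assumes H: "H \<in> carrier_mat N N" and Q: "Q \<in> carrier_mat N N"
    and HH: "H * H = H" and QQ: "Q * Q = Q"
    and adjH: "mat_adjoint H = H" and adjQ: "mat_adjoint Q = Q"
  defines "t m \<equiv> mat_trace ((H * Q) ^\<^sub>m m)"
  shows "(t 1 - t 2)\<^sup>2 \<le> (mat_trace H - t 1) * (t 2 - t 3)"
proof -
  have HHZ: "H * (H * Z) = H * Z" if "Z \<in> carrier_mat N N" for Z
    using assoc_mult_mat[OF H H that] HH by simp
  have QQZ: "Q * (Q * Z) = Q * Z" if "Z \<in> carrier_mat N N" for Z
    using assoc_mult_mat[OF Q Q that] QQ by simp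
  define K where "K = H * (Q * H)"
  define X where "X = H - Q * H"
  define Y where "Y = X * K"
  have K: "K \<in> carrier_mat N N" and X: "X \<in> carrier_mat N N" and Y: "Y \<in> carrier_mat N N"
    unfolding K_def X_def Y_def using H Q by auto
  have adjK: "mat_adjoint K = K"
    unfolding K_def using mat_adjoint_mult[OF H mult_carrier_mat[OF Q H]] mat_adjoint_mult[OF Q H] H Q
    by (simp add: adjH adjQ)
  have adjX: "mat_adjoint X = H - H * Q"
    unfolding X_def using mat_adjoint_minus[OF H mult_carrier_mat[OF Q H]] mat_adjoint_mult[OF Q H]
    by (simp add: adjH adjQ)
  have adjKK: "mat_adjoint (K * K) = K * K"
    using mat_adjoint_mult[OF K K] by (simp add: adjK)
  have t: "t m = mat_trace (K ^\<^sub>m m)" for m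
    using mat_trace_pow_mult_absorb[OF H _ HHZ, of "Q"] H Q unfolding t_def K_def by simp
  note simps = square_mat_ring_simps[where n = N] HH HHZ QQZ
  have XX: "mat_trace (mat_adjoint X * X) = mat_trace H - mat_trace K"
    unfolding adjX unfolding X_def K_def using H Q by (simp add: simps)
  have XY: "mat_trace (mat_adjoint X * Y) = mat_trace K - mat_trace (K * K)"
    unfolding adjX unfolding Y_def X_def K_def using H Q by (simp add: simps)
  have YY: "mat_trace (mat_adjoint Y * Y) = mat_trace (K * K) - mat_trace (K * K * K)"
    unfolding Y_def mat_adjoint_mult[OF X K] adjK adjX unfolding X_def K_def using H Q by (simp add: simps)
  have "cnj (mat_trace (mat_adjoint X * Y)) = mat_trace (mat_adjoint X * Y)"
    unfolding XY using mat_trace_mat_adjoint[OF K] mat_trace_mat_adjoint[of "K * K" N] K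
    by (simp add: adjK adjKK)
  moreover have "K ^\<^sub>m 2 = K * K" and "K ^\<^sub>m 3 = K * K * K"
    using K by (simp_all add: numeral_2_eq_2 numeral_3_eq_3)
  ultimately show ?thesis
    using mat_trace_adjoint_mult_sq_le[OF X Y] unfolding XX XY YY t using K by simp
qed

theorem lemma2:
  fixes n r :: nat and P :: "complex mat"
  assumes "n \<ge> 2"
    and "P \<in> carrier_mat (n^2) (n^2)"
    and "mat_adjoint P = P"
    and "P * P = P"
    and "vec_space.rank (n^2) P = r"
  shows "let P1 = kron P (1\<^sub>m n); P2 = kron (1\<^sub>m n) P;
             t = (\<lambda>m::nat. mat_trace ((P1 * P2) ^\<^sub>m m));
             F = (of_nat (r * n) - t 1) * (t 2 - t 3) - (t 1 - t 2)^2
         in F \<ge> 0"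
proof -
  note P = assms(2) and adjP = assms(3) and idem = assms(4) and rank = assms(5)
  define H where "H = kron P (1\<^sub>m n)"
  define Q where "Q = kron (1\<^sub>m n) P"
  have I: "1\<^sub>m n \<in> carrier_mat n n" by simp
  have H: "H \<in> carrier_mat (n^2 * n) (n^2 * n)" and Q: "Q \<in> carrier_mat (n^2 * n) (n^2 * n)"
    unfolding H_def Q_def using P by (auto intro!: carrier_matI)
  have "H * H = H" and "Q * Q = Q"
    unfolding H_def Q_def kron_mult[OF P I P I] kron_mult[OF I P I P] idem by simp_all
  moreover have "mat_adjoint H = H" and "mat_adjoint Q = Q"
    unfolding H_def Q_def mat_adjoint_kron adjP by simp_all
  moreover have "mat_trace H = of_nat (r * n)"
    unfolding H_def mat_trace_kron[OF P I] vec_space.mat_trace_idempotent_eq_rank[OF P idem] rank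
    by simp
  ultimately show ?thesis
    using mat_trace_projection_product_ineq[OF H Q] unfolding Let_def H_def Q_def
    by (simp add: diff_ge_0_iff_ge)
qed

end
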